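(* Let $r>0$, let $n\ge \nu\ge 2$, and let $\hat\alpha\ne0$, $\hat\beta$, $\hat\gamma$ be real numbers. Let $X^{(0)}=(x^{(0)}(1),\dots,x^{(0)}(n))$ be a real sequence whose $r$-th accumulated sequence $X^{(r)}=X^{(0)}A^r$ satisfies $$x^{(r)}(k)=\left[x^{(0)}(1)-\frac{\hat\beta}{\hat\alpha}+\frac{\hat\beta}{\hat\alpha^2}-\frac{\hat\gamma}{\hat\alpha}\right]e^{-\hat\alpha(k-1)}+\frac{\hat\beta}{\hat\alpha}k-\frac{\hat\beta}{\hat\alpha^2}+\frac{\hat\gamma}{\hat\alpha},\quad k=2,\dots,n.$$ Let $(a,b,c)$ be the least-squares estimate $(a,b,c)^{\mathcal T}=(B^{\mathcal T}B)^{-1}B^{\mathcal T}Y$ computed from this sequence, and let $(\alpha,\beta,\gamma)$ be the FAGMO(1,1,$k$) parameters $$\alpha=\ln\frac{2+a}{2-a},\qquad \beta=\frac{b}{a}\ln\frac{2+a}{2-a},\qquad \gamma=\frac{\alpha c}{a}-\frac{\alpha b}{2a}+\frac{\beta}{\alpha}+\frac{\beta}{2}-\frac{\beta}{a}$$ (assuming all these quantities are well defined). Then $\alpha=\hat\alpha$, $\beta=\hat\beta$, $\gamma=\hat\gamma$, and the FAGMO(1,1,$k$) predicted values $\hat x^{(0)}(k)$, $k=1,\dots,n$, coincide with the given data $x^{(0)}(k)$.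
   Context: Notation: $A^r$ is the $n\times n$ upper triangular Toeplitz matrix with $(j,l)$ entry $\left[{}_{l-j}^{r}\right]$ for $l\ge j$, where $\left[{}_0^r\right]=1$ and $\left[{}_i^r\right]=\frac{r(r+1)\cdots(r+i-1)}{i!}$; $D^r=(A^r)^{-1}$ is the upper triangular Toeplitz matrix with entries $\left[{}_{l-j}^{-r}\right]$, $\left[{}_0^{-r}\right]=1$, $\left[{}_i^{-r}\right]=\frac{(-r)(-r+1)\cdots(-r+i-1)}{i!}$. Least squares: with $z^{(r)}(k)=\tfrac12(x^{(r)}(k-1)+x^{(r)}(k))$ and $x^{(r-1)}(k):=x^{(r)}(k)-x^{(r)}(k-1)$, $B$ is the $(\nu-1)\times 3$ matrix with rows $\big(-z^{(r)}(k),\ \tfrac{2k-1}{2},\ 1\big)$ and $Y$ the column vector with entries $x^{(r-1)}(k)$, $k=2,\dots,\nu$ ($\nu$ = number of samples used to build the model). FAGMO(1,1,$k$) prediction: $\hat x^{(r)}(1)=x^{(0)}(1)$ and for $k\ge2$, $\hat x^{(r)}(k)=\left[x^{(0)}(1)-\frac{\beta}{\alpha}+\frac{\beta}{\alpha^2}-\frac{\gamma}{\alpha}\right]e^{-\alpha(k-1)}+\frac{\beta}{\alpha}k-\frac{\beta}{\alpha^2}+\frac{\gamma}{\alpha}$; the predicted values are $(\hat x^{(0)}(1),\dots,\hat x^{(0)}(n))=(\hat x^{(r)}(1),\dots,\hat x^{(r)}(n))D^r$. *)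

theory Defs
  imports "HOL-Analysis.Analysis"
begin

text \<open>Sequences are functions nat \<Rightarrow> real, used on the index range 1..n.\<close>

definition gbin :: "real \<Rightarrow> nat \<Rightarrow> real" where
  "gbin r i = pochhammer r i / fact i"

definition Amat :: "real \<Rightarrow> nat \<Rightarrow> nat \<Rightarrow> real" where
  "Amat r j l = (if j \<le> l then gbin r (l - j) else 0)"

definition Dmat :: "real \<Rightarrow> nat \<Rightarrow> nat \<Rightarrow> real" where
  "Dmat r j l = (if j \<le> l then gbin (-r) (l - j) else 0)"

definition rowmul :: "nat \<Rightarrow> (nat \<Rightarrow> real) \<Rightarrow> (nat \<Rightarrow> nat \<Rightarrow> real) \<Rightarrow> nat \<Rightarrow> real" where
  "rowmul n x M l = (\<Sum>j = 1..n. x j * M j l)"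

definition accum :: "real \<Rightarrow> nat \<Rightarrow> (nat \<Rightarrow> real) \<Rightarrow> nat \<Rightarrow> real" where
  "accum r n x = rowmul n x (Amat r)"

definition zr :: "real \<Rightarrow> nat \<Rightarrow> (nat \<Rightarrow> real) \<Rightarrow> nat \<Rightarrow> real" where
  "zr r n x k = (accum r n x (k - 1) + accum r n x k) / 2"

definition dr :: "real \<Rightarrow> nat \<Rightarrow> (nat \<Rightarrow> real) \<Rightarrow> nat \<Rightarrow> real" where
  "dr r n x k = accum r n x k - accum r n x (k - 1)"

definition Brow :: "real \<Rightarrow> nat \<Rightarrow> (nat \<Rightarrow> real) \<Rightarrow> nat \<Rightarrow> real^3" where
  "Brow r n x k = vector [- zr r n x k, (2 * real k - 1) / 2, 1]"

definition BtB :: "real \<Rightarrow> nat \<Rightarrow> (nat \<Rightarrow> real) \<Rightarrow> nat \<Rightarrow> real^3^3" where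
  "BtB r n x \<nu> = (\<chi> i j. \<Sum>k = 2..\<nu>. Brow r n x k $ i * Brow r n x k $ j)"

definition BtY :: "real \<Rightarrow> nat \<Rightarrow> (nat \<Rightarrow> real) \<Rightarrow> nat \<Rightarrow> real^3" where
  "BtY r n x \<nu> = (\<chi> i. \<Sum>k = 2..\<nu>. Brow r n x k $ i * dr r n x k)"

definition lsq :: "real \<Rightarrow> nat \<Rightarrow> (nat \<Rightarrow> real) \<Rightarrow> nat \<Rightarrow> real^3" where
  "lsq r n x \<nu> = matrix_inv (BtB r n x \<nu>) *v BtY r n x \<nu>"

definition fag_alpha :: "real \<Rightarrow> real" where
  "fag_alpha a = ln ((2 + a) / (2 - a))"

definition fag_beta :: "real \<Rightarrow> real \<Rightarrow> real" where
  "fag_beta a b = b / a * ln ((2 + a) / (2 - a))"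

definition fag_gamma :: "real \<Rightarrow> real \<Rightarrow> real \<Rightarrow> real" where
  "fag_gamma a b c =
     (let \<alpha> = fag_alpha a; \<beta> = fag_beta a b
      in \<alpha> * c / a - \<alpha> * b / (2 * a) + \<beta> / \<alpha> + \<beta> / 2 - \<beta> / a)"

definition resp :: "real \<Rightarrow> real \<Rightarrow> real \<Rightarrow> real \<Rightarrow> nat \<Rightarrow> real" where
  "resp x1 \<alpha> \<beta> \<gamma> k =
     (x1 - \<beta> / \<alpha> + \<beta> / \<alpha>^2 - \<gamma> / \<alpha>) * exp (- \<alpha> * (real k - 1))
     + \<beta> / \<alpha> * real k - \<beta> / \<alpha>^2 + \<gamma> / \<alpha>"

definition pred_r :: "real \<Rightarrow> real \<Rightarrow> real \<Rightarrow> real \<Rightarrow> nat \<Rightarrow> real" where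
  "pred_r x1 \<alpha> \<beta> \<gamma> k = (if k = 1 then x1 else resp x1 \<alpha> \<beta> \<gamma> k)"

definition pred0 :: "real \<Rightarrow> nat \<Rightarrow> nat \<Rightarrow> (nat \<Rightarrow> real) \<Rightarrow> nat \<Rightarrow> real" where
  "pred0 r n \<nu> x =
     (let v = lsq r n x \<nu>; a = v $ 1; b = v $ 2; c = v $ 3
      in rowmul n (pred_r (x 1) (fag_alpha a) (fag_beta a b) (fag_gamma a b c)) (Dmat r))"

end

theory Submission
  imports Defs
begin

text \<open>
  D^r inverts A^r because the generating series of [i over r] is (1 - t)^(-r), so the
  convolution of the coefficients of r and -r is Vandermonde's identity for 0 choose N.
  If the accumulated data follow the time response exactly, then with a = 2 tanh(alpha/2) the
  grey equation x^(r-1)(k) + a z^(r)(k) = b (2k - 1)/2 + c holds without residual for every k;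
  an invertible normal system then returns exactly this (a, b, c), and the FAGMO formulas
  invert the parametrisation. The predicted accumulated sequence is therefore X^(r) itself,
  and multiplying by D^r gives back X^(0).
\<close>

lemma gbin_eq_gchoose: "gbin r m = (-1) ^ m * ((- r) gchoose m)"
  by (simp add: gbin_def gbinomial_pochhammer)

lemma gbin_convolution_neg:
  "(\<Sum>m = 0..N. gbin r m * gbin (- r) (N - m)) = (if N = 0 then 1 else 0)"
proof -
  have "(\<Sum>m = 0..N. gbin r m * gbin (- r) (N - m))
      = (\<Sum>m = 0..N. (-1) ^ N * (((- r) gchoose m) * (r gchoose (N - m))))"
  proof (rule sum.cong)
    fix m assume "m \<in> {0..N}"
    then have "(-1::real) ^ m * (-1) ^ (N - m) = (-1) ^ N"
      by (simp flip: power_add)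
    then show "gbin r m * gbin (- r) (N - m) = (-1) ^ N * (((- r) gchoose m) * (r gchoose (N - m)))"
      by (simp add: gbin_eq_gchoose)
  qed simp
  also have "\<dots> = (-1) ^ N * ((- r + r) gchoose N)"
    by (simp add: gbinomial_Vandermonde flip: sum_distrib_left)
  finally show ?thesis
    by (simp add: gbinomial_0_left)
qed

lemma Amat_Dmat_inverse:
  assumes "i \<in> {1..n}" and "k \<in> {1..n}"
  shows "(\<Sum>j = 1..n. Amat r i j * Dmat r j k) = (if i = k then 1 else 0)"
proof (cases "i \<le> k")
  case False
  then show ?thesis
    by (intro trans[OF sum.neutral]) (auto simp: Amat_def Dmat_def)
next
  case True
  have "(\<Sum>j = 1..n. Amat r i j * Dmat r j k) = (\<Sum>j = i..k. gbin r (j - i) * gbin (- r) (k - j))"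
    using assms True
    by (intro sum.mono_neutral_cong_right) (auto simp: Amat_def Dmat_def)
  also have "\<dots> = (\<Sum>m = 0..k - i. gbin r m * gbin (- r) (k - i - m))"
    using True
    by (intro sum.reindex_bij_witness[where i = "\<lambda>m. m + i" and j = "\<lambda>j. j - i"]) auto
  also have "\<dots> = (if i = k then 1 else 0)"
    using True by (subst gbin_convolution_neg) auto
  finally show ?thesis .
qed

lemma accum_Dmat_inverse:
  assumes "k \<in> {1..n}"
  shows "rowmul n (accum r n x) (Dmat r) k = x k"
proof -
  have "rowmul n (accum r n x) (Dmat r) k = (\<Sum>j = 1..n. \<Sum>i = 1..n. x i * Amat r i j * Dmat r j k)"
    by (simp add: rowmul_def accum_def sum_distrib_right)
  also have "\<dots> = (\<Sum>i = 1..n. x i * (\<Sum>j = 1..n. Amat r i j * Dmat r j k))"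
    by (subst sum.swap) (simp add: sum_distrib_left mult.assoc)
  also have "\<dots> = (\<Sum>i = 1..n. x i * (if i = k then 1 else 0))"
    using assms by (intro sum.cong refl) (subst Amat_Dmat_inverse, auto)
  also have "\<dots> = x k"
    using assms by (simp add: if_distrib cong: if_cong)
  finally show ?thesis .
qed

lemma accum_first:
  assumes "1 \<le> n"
  shows "accum r n x 1 = x 1"
proof -
  have "accum r n x 1 = (\<Sum>j \<in> {1}. x j * Amat r j 1)"
    unfolding accum_def rowmul_def using assms
    by (intro sum.mono_neutral_right) (auto simp: Amat_def)
  then show ?thesis
    by (simp add: Amat_def gbin_def)
qed

lemma lsq_eq_exact_solution:
  assumes "invertible (BtB r n x \<nu>)"
    and "\<And>k. k \<in> {2..\<nu>} \<Longrightarrow> Brow r n x k \<bullet> v = dr r n x k"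
  shows "lsq r n x \<nu> = v"
proof -
  have "BtB r n x \<nu> *v v = (\<chi> i. \<Sum>k = 2..\<nu>. Brow r n x k $ i * (Brow r n x k \<bullet> v))"
    by (simp add: BtB_def matrix_vector_mult_def inner_vec_def vec_eq_iff
        sum_distrib_left sum_distrib_right mult.assoc sum.swap[where A = UNIV])
  also have "\<dots> = BtY r n x \<nu>"
    by (simp add: BtY_def assms(2) vec_eq_iff)
  finally have normal: "BtB r n x \<nu> *v v = BtY r n x \<nu>" .
  have "matrix_inv (BtB r n x \<nu>) ** BtB r n x \<nu> = mat 1"
    using assms(1) unfolding invertible_def matrix_inv_def by (rule someI2_ex) auto
  with normal show ?thesis
    unfolding lsq_def by (metis matrix_vector_mul_assoc matrix_vector_mul_lid)
qed

lemma tanh_half_real: "tanh (x / 2) = (exp x - 1) / (exp x + 1 :: real)"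
proof -
  define y where "y = exp (x / 2)"
  have "y > 0"
    by (simp add: y_def)
  have "exp x = y * y"
    by (simp add: y_def flip: exp_add)
  moreover have "exp (- (x / 2)) = 1 / y"
    by (simp add: y_def exp_minus field_simps)
  moreover have "(y - 1 / y) / (y + 1 / y) = (y * y - 1) / (y * y + 1)"
    using \<open>y > 0\<close> by (simp add: divide_simps add_pos_pos)
  ultimately show ?thesis
    by (simp add: tanh_altdef flip: y_def)
qed

lemma fag_alpha_eq_artanh: "fag_alpha a = 2 * artanh (a / 2)"
proof -
  have "(1 + a / 2) / (1 - a / 2) = (2 + a) / (2 - a)"
    by (simp add: divide_simps algebra_simps)
  then show ?thesis
    by (simp add: fag_alpha_def artanh_def)
qed

text \<open>a = 2 tanh(\<alpha>/2) solves \<alpha> = ln ((2 + a) / (2 - a)); b and c are then read off by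
  matching the grey equation with the linear part of the time response.\<close>
definition fagmo_coeffs :: "real \<Rightarrow> real \<Rightarrow> real \<Rightarrow> real^3" where
  "fagmo_coeffs \<alpha> \<beta> \<gamma> =
     (let a = 2 * tanh (\<alpha> / 2) in vector [a, a * \<beta> / \<alpha>, \<beta> / \<alpha> + a * (\<gamma> / \<alpha> - \<beta> / \<alpha>\<^sup>2)])"

lemma fag_params_fagmo_coeffs:
  fixes \<alpha> \<beta> \<gamma> :: real
  assumes "\<alpha> \<noteq> 0"
  defines "v \<equiv> fagmo_coeffs \<alpha> \<beta> \<gamma>"
  shows "fag_alpha (v $ 1) = \<alpha>"
    and "fag_beta (v $ 1) (v $ 2) = \<beta>"
    and "fag_gamma (v $ 1) (v $ 2) (v $ 3) = \<gamma>"
proof -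
  define a where "a = 2 * tanh (\<alpha> / 2)"
  have v: "v $ 1 = a" "v $ 2 = a * \<beta> / \<alpha>" "v $ 3 = \<beta> / \<alpha> + a * (\<gamma> / \<alpha> - \<beta> / \<alpha>\<^sup>2)"
    by (simp_all add: v_def fagmo_coeffs_def Let_def a_def vector_3)
  have a_nz: "a \<noteq> 0"
    using assms(1) by (simp add: a_def)
  show alpha: "fag_alpha (v $ 1) = \<alpha>"
    by (simp add: v a_def fag_alpha_eq_artanh artanh_tanh_real)
  show beta: "fag_beta (v $ 1) (v $ 2) = \<beta>"
    using alpha a_nz assms(1) by (simp add: fag_beta_def v flip: fag_alpha_def)
  show "fag_gamma (v $ 1) (v $ 2) (v $ 3) = \<gamma>"
    unfolding fag_gamma_def Let_def alpha beta using a_nz assms(1)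
    by (simp add: v field_simps power2_eq_square)
qed

lemma resp_first: "resp x1 \<alpha> \<beta> \<gamma> 1 = x1"
  by (simp add: resp_def)

lemma resp_grey_equation:
  fixes x1 \<alpha> \<beta> \<gamma> :: real and k :: nat
  assumes "1 \<le> k"
  defines "f \<equiv> resp x1 \<alpha> \<beta> \<gamma>" and "v \<equiv> fagmo_coeffs \<alpha> \<beta> \<gamma>"
  shows "- ((f (k - 1) + f k) / 2) * v $ 1 + (2 * real k - 1) / 2 * v $ 2 + v $ 3 = f k - f (k - 1)"
proof -
  define E where "E = exp \<alpha>"
  define a where "a = 2 * tanh (\<alpha> / 2)"
  define p where "p = \<beta> / \<alpha>"
  define q where "q = \<gamma> / \<alpha> - \<beta> / \<alpha>\<^sup>2"
  define w where "w = (x1 - p - q) * exp (- \<alpha> * (real k - 1))"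
  have "E + 1 \<noteq> 0"
    using exp_gt_zero[of \<alpha>] unfolding E_def by linarith
  then have a_E: "a * (E + 1) = 2 * (E - 1)"
    by (simp add: a_def E_def tanh_half_real)
  have "f k = w + p * real k + q"
    by (simp add: f_def resp_def w_def p_def q_def algebra_simps)
  moreover have "f (k - 1) = E * w + p * (real k - 1) + q"
    using assms(1)
    by (simp add: f_def resp_def w_def p_def q_def E_def of_nat_diff algebra_simps
        flip: exp_add)
  moreover have "v $ 1 = a" "v $ 2 = a * p" "v $ 3 = p + a * q"
    by (simp_all add: v_def fagmo_coeffs_def Let_def a_def p_def q_def vector_3)
  ultimately show ?thesis
    using a_E by simp algebra
qed

theorem theorem4:
  fixes r \<alpha>h \<beta>h \<gamma>h :: real and n \<nu> :: nat and x :: "nat \<Rightarrow> real"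
  assumes "r > 0" and "2 \<le> \<nu>" and "\<nu> \<le> n" and "\<alpha>h \<noteq> 0"
    and model: "\<forall>k \<in> {2..n}. accum r n x k = resp (x 1) \<alpha>h \<beta>h \<gamma>h k"
    and inv: "invertible (BtB r n x \<nu>)"
    and a_nz: "lsq r n x \<nu> $ 1 \<noteq> 0"
    and ln_def: "(2 + lsq r n x \<nu> $ 1) / (2 - lsq r n x \<nu> $ 1) > 0"
  shows "fag_alpha (lsq r n x \<nu> $ 1) = \<alpha>h
       \<and> fag_beta (lsq r n x \<nu> $ 1) (lsq r n x \<nu> $ 2) = \<beta>h
       \<and> fag_gamma (lsq r n x \<nu> $ 1) (lsq r n x \<nu> $ 2) (lsq r n x \<nu> $ 3) = \<gamma>h
       \<and> (\<forall>k \<in> {1..n}. pred0 r n \<nu> x k = x k)"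
proof -
  have accum_resp: "accum r n x k = resp (x 1) \<alpha>h \<beta>h \<gamma>h k" if "k \<in> {1..n}" for k
    using that model accum_first[of n r x] resp_first by (cases "k = 1") auto
  then have pred_r_accum: "pred_r (x 1) \<alpha>h \<beta>h \<gamma>h k = accum r n x k" if "k \<in> {1..n}" for k
    using that resp_first by (simp add: pred_r_def)
  have grey_fit: "Brow r n x k \<bullet> fagmo_coeffs \<alpha>h \<beta>h \<gamma>h = dr r n x k" if "k \<in> {2..\<nu>}" for k
  proof -
    have "k \<in> {1..n}" and "k - 1 \<in> {1..n}"
      using that \<open>\<nu> \<le> n\<close> by auto
    then show ?thesis
      using that resp_grey_equation[of k "x 1" \<alpha>h \<beta>h \<gamma>h]
      by (simp add: Brow_def zr_def dr_def inner_vec_def sum_3 vector_3 accum_resp)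
  qed
  have lsq: "lsq r n x \<nu> = fagmo_coeffs \<alpha>h \<beta>h \<gamma>h"
    by (rule lsq_eq_exact_solution[OF inv grey_fit])
  note params = fag_params_fagmo_coeffs[OF \<open>\<alpha>h \<noteq> 0\<close>, of \<beta>h \<gamma>h, folded lsq]
  have "pred0 r n \<nu> x k = x k" if "k \<in> {1..n}" for k
  proof -
    have "pred0 r n \<nu> x k = rowmul n (pred_r (x 1) \<alpha>h \<beta>h \<gamma>h) (Dmat r) k"
      by (simp add: pred0_def Let_def params)
    also have "\<dots> = rowmul n (accum r n x) (Dmat r) k"
      unfolding rowmul_def by (intro sum.cong refl) (metis pred_r_accum)
    finally show ?thesis
      using that by (simp add: accum_Dmat_inverse)
  qed
  with params show ?thesis
    by blast
qed

end
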